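(* Let $(\mathcal{S},\mathcal{R})$ be a positive presentation. Then $(\mathcal{S},\mathcal{R})$ is $r$-complete if and only if any one of the following four conditions holds, and these four conditions are equivalent: (i) for all $u,v\in\mathcal{S}^*$, $u\equiv v$ holds if and only if $u^{-1}v\curvearrowright_r\varepsilon$; (ii) the binary relation on $\mathcal{S}^*$ defined by "$u^{-1}v\curvearrowright_r\varepsilon$" is transitive; (iii) the strong $r$-cube condition holds at $u,v,w$ for all $u,v,w\in\mathcal{S}^*$; (iv) the $r$-cube condition holds at $u,v,w$ for all $u,v,w\in\mathcal{S}^*$.
   Context: A positive presentation is a pair $(\mathcal{S},\mathcal{R})$ where $\mathcal{S}$ is a nonempty set of letters and $\mathcal{R}$ is a family of relations $u=v$, i.e. unordered pairs $\{u,v\}$ of nonempty words in the free monoid $\mathcal{S}^*$. $\varepsilon$ denotes the empty word; $\equiv$ is the smallest congruence on $\mathcal{S}^*$ containing all pairs of $\mathcal{R}$. Let $\mathcal{S}^{-1}=\{s^{-1}:s\in\mathcal{S}\}$ be a disjoint copy of $\mathcal{S}$; for $u\in\mathcal{S}^*$, $u^{-1}$ is obtained by reversing the order of the letters of $u$ and replacing each $s$ by $s^{-1}$. Right reversing: for words $\mathbf{w},\mathbf{w}'$ on $\mathcal{S}\cup\mathcal{S}^{-1}$ we write $\mathbf{w}\curvearrowright_r\mathbf{w}'$ if $\mathbf{w}'$ is obtained from $\mathbf{w}$ by a finite (possibly empty) sequence of steps, each of which either deletes a subword $u^{-1}u$ with $u\in\mathcal{S}^*$ nonempty, or replaces a subword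 $u^{-1}v$ with $u,v\in\mathcal{S}^*$ nonempty by a word $v'u'^{-1}$ with $u',v'\in\mathcal{S}^*$ such that $uv'=vu'$ is a relation of $\mathcal{R}$. $(\mathcal{S},\mathcal{R})$ is $r$-complete if for all $u,v,u',v'\in\mathcal{S}^*$ with $uv'\equiv vu'$ there exist $u'',v'',w\in\mathcal{S}^*$ with $u^{-1}v\curvearrowright_r v''u''^{-1}$, $u'\equiv u''w$ and $v'\equiv v''w$. For $u,v,w\in\mathcal{S}^*$: the $r$-cube condition holds at $u,v,w$ if whenever $u^{-1}ww^{-1}v\curvearrowright_r v'u'^{-1}$ with $u',v'\in\mathcal{S}^*$, there exist $u'',v'',w''\in\mathcal{S}^*$ with $u^{-1}v\curvearrowright_r v''u''^{-1}$, $u'\equiv u''w''$ and $v'\equiv v''w''$; the strong $r$-cube condition holds at $u,v,w$ if whenever $u^{-1}ww^{-1}v\curvearrowright_r v'u'^{-1}$ with $u',v'\in\mathcal{S}^*$, we have $(uv')^{-1}(vu')\curvearrowright_r\varepsilon$. *)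

theory Defs
  imports Main
begin

datatype 'a sletter = Pos 'a | Neg 'a

definition pw :: "'a list \<Rightarrow> 'a sletter list" where
  "pw u = map Pos u"

definition iw :: "'a list \<Rightarrow> 'a sletter list" where
  "iw u = rev (map Neg u)"

text \<open>A relation family R is a set of pairs; a pair (u,v) represents the unordered relation u = v.\<close>
definition is_rel :: "('a list \<times> 'a list) set \<Rightarrow> 'a list \<Rightarrow> 'a list \<Rightarrow> bool" where
  "is_rel R x y \<longleftrightarrow> (x, y) \<in> R \<or> (y, x) \<in> R"

definition positive_presentation :: "'a set \<Rightarrow> ('a list \<times> 'a list) set \<Rightarrow> bool" where
  "positive_presentation S R \<longleftrightarrow> S \<noteq> {} \<and>
     (\<forall>(u, v) \<in> R. u \<noteq> [] \<and> v \<noteq> [] \<and> set u \<subseteq> S \<and> set v \<subseteq> S)"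

inductive pequiv :: "'a set \<Rightarrow> ('a list \<times> 'a list) set \<Rightarrow> 'a list \<Rightarrow> 'a list \<Rightarrow> bool"
  for S R where
  base: "(u, v) \<in> R \<Longrightarrow> pequiv S R u v"
| refl: "set w \<subseteq> S \<Longrightarrow> pequiv S R w w"
| sym: "pequiv S R u v \<Longrightarrow> pequiv S R v u"
| trans: "pequiv S R u v \<Longrightarrow> pequiv S R v w \<Longrightarrow> pequiv S R u w"
| mult: "pequiv S R u v \<Longrightarrow> pequiv S R u' v' \<Longrightarrow> pequiv S R (u @ u') (v @ v')"

inductive rrev_step :: "'a set \<Rightarrow> ('a list \<times> 'a list) set \<Rightarrow> 'a sletter list \<Rightarrow> 'a sletter list \<Rightarrow> bool"
  for S R where
  cancel: "u \<noteq> [] \<Longrightarrow> set u \<subseteq> S \<Longrightarrow>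
     rrev_step S R (x @ iw u @ pw u @ y) (x @ y)"
| rel: "u \<noteq> [] \<Longrightarrow> v \<noteq> [] \<Longrightarrow> set u \<subseteq> S \<Longrightarrow> set v \<subseteq> S \<Longrightarrow>
     set u' \<subseteq> S \<Longrightarrow> set v' \<subseteq> S \<Longrightarrow> is_rel R (u @ v') (v @ u') \<Longrightarrow>
     rrev_step S R (x @ iw u @ pw v @ y) (x @ pw v' @ iw u' @ y)"

definition rrev :: "'a set \<Rightarrow> ('a list \<times> 'a list) set \<Rightarrow> 'a sletter list \<Rightarrow> 'a sletter list \<Rightarrow> bool" where
  "rrev S R = (rrev_step S R)\<^sup>*\<^sup>*"

definition r_complete :: "'a set \<Rightarrow> ('a list \<times> 'a list) set \<Rightarrow> bool" where
  "r_complete S R \<longleftrightarrow>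
    (\<forall>u v u' v'. set u \<subseteq> S \<longrightarrow> set v \<subseteq> S \<longrightarrow> set u' \<subseteq> S \<longrightarrow> set v' \<subseteq> S \<longrightarrow>
      pequiv S R (u @ v') (v @ u') \<longrightarrow>
      (\<exists>u'' v'' w. set u'' \<subseteq> S \<and> set v'' \<subseteq> S \<and> set w \<subseteq> S \<and>
         rrev S R (iw u @ pw v) (pw v'' @ iw u'') \<and>
         pequiv S R u' (u'' @ w) \<and> pequiv S R v' (v'' @ w)))"

definition r_cube :: "'a set \<Rightarrow> ('a list \<times> 'a list) set \<Rightarrow> 'a list \<Rightarrow> 'a list \<Rightarrow> 'a list \<Rightarrow> bool" where
  "r_cube S R u v w \<longleftrightarrow>
    (\<forall>u' v'. set u' \<subseteq> S \<longrightarrow> set v' \<subseteq> S \<longrightarrow>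
      rrev S R (iw u @ pw w @ iw w @ pw v) (pw v' @ iw u') \<longrightarrow>
      (\<exists>u'' v'' w''. set u'' \<subseteq> S \<and> set v'' \<subseteq> S \<and> set w'' \<subseteq> S \<and>
         rrev S R (iw u @ pw v) (pw v'' @ iw u'') \<and>
         pequiv S R u' (u'' @ w'') \<and> pequiv S R v' (v'' @ w'')))"

definition strong_r_cube :: "'a set \<Rightarrow> ('a list \<times> 'a list) set \<Rightarrow> 'a list \<Rightarrow> 'a list \<Rightarrow> 'a list \<Rightarrow> bool" where
  "strong_r_cube S R u v w \<longleftrightarrow>
    (\<forall>u' v'. set u' \<subseteq> S \<longrightarrow> set v' \<subseteq> S \<longrightarrow>
      rrev S R (iw u @ pw w @ iw w @ pw v) (pw v' @ iw u') \<longrightarrow>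
      rrev S R (iw (u @ v') @ pw (v @ u')) [])"

end

theory Submission
  imports Defs
begin

text \<open>Reversing is sound: reading a signed word \<open>w\<close> as the relation \<open>x w \<equiv> z\<close> on \<open>S*\<close>, every
  reversing step enlarges that relation, so \<open>u\<inverse>v \<curvearrowright>\<^sub>r v'u'\<inverse>\<close> forces \<open>u v' \<equiv> v u'\<close>. Hence (i) only
  asks that \<open>u \<equiv> v\<close> imply \<open>u\<inverse>v \<curvearrowright>\<^sub>r \<epsilon>\<close>, which is completeness at \<open>u' = v' = \<epsilon>\<close>. Conversely,
  a reversing of \<open>(u v')\<inverse>(v u')\<close> to \<open>\<epsilon>\<close> can be cut along \<open>v'\<inverse> \<cdot> u\<inverse>v \<cdot> u'\<close>, since a
  reversing of a product factors through reversings of its factors (the reversing grid), and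
  the piece coming from \<open>u\<inverse>v\<close> provides the witnesses that completeness asks for.

  Of the rules generating \<open>\<equiv>\<close>, a relation is a single reversing step, symmetry is inversion of
  words and compatibility is reversing in context; transitivity is the only rule reversing to \<open>\<epsilon>\<close>
  does not handle by itself, so (ii) gives (i) by induction on \<open>\<equiv>\<close>. Finally \<open>u\<inverse>ww\<inverse>v\<close> relates
  \<open>u\<close> to \<open>v\<close>, so soundness with (i) gives the strong cube condition and with completeness the
  cube condition, while either condition at \<open>u' = v' = \<epsilon>\<close> is the transitivity (ii).\<close>

lemma pw_Nil [simp]: "pw [] = []" and iw_Nil [simp]: "iw [] = []"
  by (simp_all add: pw_def iw_def)

lemma pw_Cons [simp]: "pw (a # u) = Pos a # pw u" and iw_Cons [simp]: "iw (a # u) = iw u @ [Neg a]"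
  by (simp_all add: pw_def iw_def)

lemma pw_append [simp]: "pw (u @ v) = pw u @ pw v" and iw_append [simp]: "iw (u @ v) = iw v @ iw u"
  by (simp_all add: pw_def iw_def)

lemma iw_eq_map_rev: "iw u = map Neg (rev u)"
  by (simp add: iw_def rev_map)

fun letter :: "'a sletter \<Rightarrow> 'a" where
  "letter (Pos a) = a"
| "letter (Neg a) = a"

lemma set_pw [simp]: "set (pw u) = Pos ` set u"
  and set_iw [simp]: "set (iw u) = Neg ` set u"
  by (simp_all add: pw_def iw_def)

lemma pw_iw_eq_pw_iw_iff [simp]: "pw P @ iw Q = pw P' @ iw Q' \<longleftrightarrow> P = P' \<and> Q = Q'"
proof (induction P arbitrary: P')
  case Nil
  then show ?case
    by (cases P') (auto simp: iw_eq_map_rev inj_def Cons_eq_map_conv map_eq_Cons_conv)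
next
  case (Cons p P)
  then show ?case
    by (cases P') (auto simp: iw_eq_map_rev Cons_eq_map_conv map_eq_Cons_conv)
qed

lemma append_eq_pw_iw:
  assumes "w1 @ w2 = pw P @ iw Q"
  obtains P1 Q1 P2 Q2 where "w1 = pw P1 @ iw Q1" "w2 = pw P2 @ iw Q2" "Q1 = [] \<or> P2 = []"
    "P = P1 @ P2" "Q = Q2 @ Q1"
proof -
  from assms obtain us where
    "w1 = pw P @ us \<and> us @ w2 = iw Q \<or> w1 @ us = pw P \<and> w2 = us @ iw Q"
    by (auto simp: append_eq_append_conv2)
  then show thesis
  proof
    assume "w1 = pw P @ us \<and> us @ w2 = iw Q"
    moreover from this obtain l1 l2 where "us = map Neg l1" "w2 = map Neg l2" "rev Q = l1 @ l2"
      by (auto simp: iw_eq_map_rev append_eq_map_conv)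
    then have "us = iw (rev l1)" "w2 = iw (rev l2)" "Q = rev l2 @ rev l1"
      by (auto simp: iw_eq_map_rev) (metis rev_append rev_rev_ident)
    ultimately show thesis using that[of P "rev l1" "[]" "rev l2"] by simp
  next
    assume "w1 @ us = pw P \<and> w2 = us @ iw Q"
    moreover from this obtain P1 P2 where "w1 = pw P1" "us = pw P2" "P = P1 @ P2"
      by (auto simp: pw_def append_eq_map_conv)
    ultimately show thesis using that[of P1 "[]" P2 Q] by simp
  qed
qed

lemma pw_iw_neq_redex: "pw P @ iw Q \<noteq> x @ [Neg s, Pos t] @ y"
proof (induction x arbitrary: P)
  case Nil
  show ?case by (cases P) (auto dest!: arg_cong[where f = set])
next
  case (Cons c x)
  then show ?case by (cases P) (auto dest!: arg_cong[where f = set])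
qed

definition elementary_reversal ::
  "'a set \<Rightarrow> ('a list \<times> 'a list) set \<Rightarrow> 'a \<Rightarrow> 'a \<Rightarrow> 'a list \<Rightarrow> 'a list \<Rightarrow> bool" where
  "elementary_reversal S R s t a b \<longleftrightarrow> s = t \<and> s \<in> S \<and> a = [] \<and> b = [] \<or>
     s \<in> S \<and> t \<in> S \<and> set a \<subseteq> S \<and> set b \<subseteq> S \<and> is_rel R (s # a) (t # b)"

text \<open>Reversing one pair \<open>s\<inverse> t\<close> at a time generates the same relation as \<open>rrev\<close>
  (\<open>rrev_eq_letter_steps\<close>), but a single step now meets a cut point of the word in only three
  ways (\<open>letter_step_append_cases\<close>).\<close>

inductive letter_step :: "'a set \<Rightarrow> ('a list \<times> 'a list) set \<Rightarrow> 'a sletter list \<Rightarrow> 'a sletter list \<Rightarrow> bool"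
  for S R where
  "elementary_reversal S R s t a b \<Longrightarrow> letter_step S R (x @ [Neg s, Pos t] @ y) (x @ pw a @ iw b @ y)"

lemma letter_step_ctx: "letter_step S R w w' \<Longrightarrow> letter_step S R (p @ w @ q) (p @ w' @ q)"
proof (induction rule: letter_step.induct)
  case (1 s t a b x y)
  from letter_step.intros[OF 1, of "p @ x" "y @ q"] show ?case by simp
qed

lemma letter_steps_ctx:
  "(letter_step S R ^^ n) w w' \<Longrightarrow> (letter_step S R ^^ n) (p @ w @ q) (p @ w' @ q)"
  by (induction n arbitrary: w') (auto elim!: relpowp_Suc_E intro: relpowp_Suc_I letter_step_ctx)

lemma letter_step_imp_rrev_step: "letter_step S R w w' \<Longrightarrow> rrev_step S R w w'"
proof (induction rule: letter_step.induct)
  case (1 s t a b x y)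
  then consider "s = t" "s \<in> S" "a = []" "b = []"
    | "s \<in> S" "t \<in> S" "set a \<subseteq> S" "set b \<subseteq> S" "is_rel R ([s] @ a) ([t] @ b)"
    unfolding elementary_reversal_def by auto
  then show ?case
  proof cases
    case 1
    then show ?thesis using rrev_step.cancel[of "[s]" S R x y] by simp
  next
    case 2
    then show ?thesis using rrev_step.rel[of "[s]" "[t]" S b a R x y] by simp
  qed
qed

lemma letter_steps_cancel: "set u \<subseteq> S \<Longrightarrow> (letter_step S R)\<^sup>*\<^sup>* (x @ iw u @ pw u @ y) (x @ y)"
proof (induction u arbitrary: x y)
  case (Cons c u)
  then have "elementary_reversal S R c c [] []" by (simp add: elementary_reversal_def)
  from letter_step.intros[OF this, of "x @ iw u" "pw u @ y"]
  have "letter_step S R (x @ iw (c # u) @ pw (c # u) @ y) (x @ iw u @ pw u @ y)" by simp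
  with Cons show ?case by (simp add: converse_rtranclp_into_rtranclp)
qed simp

lemma rrev_step_imp_letter_steps: "rrev_step S R w w' \<Longrightarrow> (letter_step S R)\<^sup>*\<^sup>* w w'"
proof (induction rule: rrev_step.induct)
  case (cancel u x y)
  from cancel(2) show ?case by (rule letter_steps_cancel)
next
  case (rel u v u' v' x y)
  obtain s u0 t v0 where u: "u = s # u0" and v: "v = t # v0"
    using rel by (cases u; cases v) auto
  with rel have "elementary_reversal S R s t (u0 @ v') (v0 @ u')"
    by (simp add: elementary_reversal_def)
  from letter_step.intros[OF this, of "x @ iw u0" "pw v0 @ y"]
  have "letter_step S R (x @ iw u @ pw v @ y) (x @ iw u0 @ pw u0 @ (pw v' @ iw u' @ iw v0 @ pw v0 @ y))"
    using u v by simp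
  also have "(letter_step S R)\<^sup>*\<^sup>* \<dots> ((x @ pw v' @ iw u') @ iw v0 @ pw v0 @ y)"
    using letter_steps_cancel[of u0 S R x] rel u by simp
  also have "(letter_step S R)\<^sup>*\<^sup>* \<dots> (x @ pw v' @ iw u' @ y)"
    using letter_steps_cancel[of v0 S R "x @ pw v' @ iw u'" y] rel v by simp
  finally show ?case .
qed

lemma rrev_eq_letter_steps: "rrev S R = (letter_step S R)\<^sup>*\<^sup>*"
  unfolding rrev_def
  by (rule rtranclp_subset) (auto intro: letter_step_imp_rrev_step rrev_step_imp_letter_steps)

lemma rrev_ctx: "rrev S R w w' \<Longrightarrow> rrev S R (p @ w @ q) (p @ w' @ q)"
  unfolding rrev_eq_letter_steps rtranclp_power by (blast intro: letter_steps_ctx)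

lemma letter_steps_from_pw_iw:
  assumes "(letter_step S R ^^ n) (pw P @ iw Q) w"
  shows "n = 0 \<and> w = pw P @ iw Q"
proof (cases n)
  case 0
  then show ?thesis using assms by simp
next
  case (Suc m)
  with assms obtain w' where "letter_step S R (pw P @ iw Q) w'"
    by (meson relpowp_Suc_D2)
  then show ?thesis by cases (metis pw_iw_neq_redex)
qed

lemma rrev_from_pw_iw: "rrev S R (pw P @ iw Q) (pw P' @ iw Q') \<Longrightarrow> P' = P \<and> Q' = Q"
  unfolding rrev_eq_letter_steps rtranclp_power by (auto dest: letter_steps_from_pw_iw)

lemma rrev_step_letters_subset:
  "rrev_step S R w w' \<Longrightarrow> letter ` set w \<subseteq> S \<Longrightarrow> letter ` set w' \<subseteq> S"
  by (induction rule: rrev_step.induct) (auto simp: image_subset_iff subset_iff)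

lemma rrev_letters_subset:
  assumes "rrev S R w w'" and "letter ` set w \<subseteq> S"
  shows "letter ` set w' \<subseteq> S"
  using assms unfolding rrev_def
  by (induction rule: rtranclp_induct) (auto dest: rrev_step_letters_subset)

definition winv :: "'a sletter list \<Rightarrow> 'a sletter list" where
  "winv w = rev (map (case_sletter Neg Pos) w)"

lemma winv_append [simp]: "winv (w @ w') = winv w' @ winv w"
  and winv_pw [simp]: "winv (pw u) = iw u"
  and winv_iw [simp]: "winv (iw u) = pw u"
  and winv_Nil [simp]: "winv [] = []"
  by (simp_all add: winv_def pw_def iw_def rev_map)

lemma rrev_step_winv: "rrev_step S R w w' \<Longrightarrow> rrev_step S R (winv w) (winv w')"
proof (induction rule: rrev_step.induct)
  case (cancel u x y)
  from rrev_step.cancel[OF cancel, of R "winv y" "winv x"] show ?case by simp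
next
  case (rel u v u' v' x y)
  then have "is_rel R (v @ u') (u @ v')" by (auto simp: is_rel_def)
  from rrev_step.rel[OF rel(2,1,4,3,6,5) this, of "winv y" "winv x"] show ?case by simp
qed

lemma rrev_winv: "rrev S R w w' \<Longrightarrow> rrev S R (winv w) (winv w')"
  unfolding rrev_def
  by (induction rule: rtranclp_induct) (auto dest: rrev_step_winv intro: rtranclp.rtrancl_into_rtrancl)

lemma rrev_append_Nil: "rrev S R w1 [] \<Longrightarrow> rrev S R w2 [] \<Longrightarrow> rrev S R (w1 @ w2) []"
  using rrev_ctx[of S R w1 "[]" "[]" w2] by (simp add: rrev_def)

lemma rrev_Nil_trans_if_strong_r_cube:
  assumes "strong_r_cube S R u w v"
    and "rrev S R (iw u @ pw v) []" and "rrev S R (iw v @ pw w) []"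
  shows "rrev S R (iw u @ pw w) []"
proof -
  from assms(2,3) have "rrev S R (iw u @ pw v @ iw v @ pw w) (pw [] @ iw [])"
    using rrev_append_Nil by fastforce
  with assms(1) show ?thesis unfolding strong_r_cube_def by (metis append_Nil2 empty_subsetI list.set(1))
qed

section \<open>The reversing grid\<close>

lemma letter_step_append_cases:
  assumes "letter_step S R (w1 @ w2) W"
  obtains (left) w1' where "letter_step S R w1 w1'" "W = w1' @ w2"
  | (right) w2' where "letter_step S R w2 w2'" "W = w1 @ w2'"
  | (cross) x s t a b y where "elementary_reversal S R s t a b"
      "w1 = x @ [Neg s]" "w2 = Pos t # y" "W = x @ pw a @ iw b @ y"
proof -
  from assms obtain x s t a b y where el: "elementary_reversal S R s t a b"
    and eq: "w1 @ w2 = x @ [Neg s, Pos t] @ y" and W: "W = x @ pw a @ iw b @ y"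
    by cases
  from eq obtain us where
    "w1 = x @ us \<and> us @ w2 = Neg s # Pos t # y \<or> w1 @ us = x \<and> w2 = us @ Neg s # Pos t # y"
    by (auto simp: append_eq_append_conv2)
  then show thesis
  proof (elim disjE conjE)
    assume us: "w1 = x @ us" "us @ w2 = Neg s # Pos t # y"
    consider "us = []" | "us = [Neg s]" | us' where "us = Neg s # Pos t # us'" "y = us' @ w2"
      using us(2) by (auto simp: append_eq_Cons_conv)
    then show thesis
    proof cases
      case 1
      then show thesis using right[of "pw a @ iw b @ y"] letter_step.intros[OF el, of "[]" y] us W
        by simp
    next
      case 2
      then show thesis using cross[OF el] us W by simp
    next
      case 3
      then show thesis using left[of "x @ pw a @ iw b @ us'"] letter_step.intros[OF el] us W
        by simp
    qed
  next
    assume "w1 @ us = x" "w2 = us @ Neg s # Pos t # y"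
    then show thesis using right[of "us @ pw a @ iw b @ y"] letter_step.intros[OF el] W by auto
  qed
qed

text \<open>This step bound is what allows the induction in
  \<open>letter_steps_append_split\<close> to be applied twice when a step crosses the cut.\<close>

definition reversal_split ::
  "'a set \<Rightarrow> ('a list \<times> 'a list) set \<Rightarrow> nat \<Rightarrow> 'a sletter list \<Rightarrow> 'a sletter list \<Rightarrow>
    'a list \<Rightarrow> 'a list \<Rightarrow> bool" where
  "reversal_split S R n w1 w2 P Q \<longleftrightarrow> (\<exists>n1 n2 n3 P1 Q1 P2 Q2 P3 Q3. n1 + n2 + n3 \<le> n \<and>
    (letter_step S R ^^ n1) w1 (pw P1 @ iw Q1) \<and> (letter_step S R ^^ n2) w2 (pw P2 @ iw Q2) \<and>
    (letter_step S R ^^ n3) (iw Q1 @ pw P2) (pw P3 @ iw Q3) \<and> P = P1 @ P3 \<and> Q = Q2 @ Q3)"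

lemma reversal_split_0:
  assumes "w1 @ w2 = pw P @ iw Q"
  shows "reversal_split S R 0 w1 w2 P Q"
proof -
  from assms obtain P1 Q1 P2 Q2 where split: "w1 = pw P1 @ iw Q1" "w2 = pw P2 @ iw Q2"
      "Q1 = [] \<or> P2 = []" "P = P1 @ P2" "Q = Q2 @ Q1"
    by (rule append_eq_pw_iw)
  then have "iw Q1 @ pw P2 = pw P2 @ iw Q1" by auto
  with split show ?thesis unfolding reversal_split_def by (intro exI[of _ 0]) auto
qed

lemma reversal_split_step_left:
  assumes "letter_step S R w1 w1'" and "reversal_split S R m w1' w2 P Q"
  shows "reversal_split S R (Suc m) w1 w2 P Q"
proof -
  from assms(2) obtain n1 n2 n3 P1 Q1 P2 Q2 P3 Q3 where split: "n1 + n2 + n3 \<le> m"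
    "(letter_step S R ^^ n1) w1' (pw P1 @ iw Q1)"
    "(letter_step S R ^^ n2) w2 (pw P2 @ iw Q2)"
    "(letter_step S R ^^ n3) (iw Q1 @ pw P2) (pw P3 @ iw Q3)" "P = P1 @ P3" "Q = Q2 @ Q3"
    unfolding reversal_split_def by blast
  have "(letter_step S R ^^ Suc n1) w1 (pw P1 @ iw Q1)"
    using assms(1) split(2) by (rule relpowp_Suc_I2)
  moreover have "Suc n1 + n2 + n3 \<le> Suc m"
    using split(1) by simp
  ultimately show ?thesis using split unfolding reversal_split_def by blast
qed

lemma reversal_split_step_right:
  assumes "letter_step S R w2 w2'" and "reversal_split S R m w1 w2' P Q"
  shows "reversal_split S R (Suc m) w1 w2 P Q"
proof -
  from assms(2) obtain n1 n2 n3 P1 Q1 P2 Q2 P3 Q3 where split: "n1 + n2 + n3 \<le> m"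
    "(letter_step S R ^^ n1) w1 (pw P1 @ iw Q1)"
    "(letter_step S R ^^ n2) w2' (pw P2 @ iw Q2)"
    "(letter_step S R ^^ n3) (iw Q1 @ pw P2) (pw P3 @ iw Q3)" "P = P1 @ P3" "Q = Q2 @ Q3"
    unfolding reversal_split_def by blast
  have "(letter_step S R ^^ Suc n2) w2 (pw P2 @ iw Q2)"
    using assms(1) split(3) by (rule relpowp_Suc_I2)
  moreover have "n1 + Suc n2 + n3 \<le> Suc m"
    using split(1) by simp
  ultimately show ?thesis using split unfolding reversal_split_def by blast
qed

lemma reversal_split_step_cross:
  assumes el: "elementary_reversal S R s t a b"
    and x: "(letter_step S R ^^ n1) x (pw A1 @ iw B1)"
    and middle: "(letter_step S R ^^ n3) (iw B1 @ pw A2) (pw A3 @ iw B3)"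
    and y: "reversal_split S R k (pw a @ iw b) y A2 B2"
    and "n1 + k + n3 \<le> m"
  shows "reversal_split S R (Suc m) (x @ [Neg s]) (Pos t # y) (A1 @ A3) (B2 @ B3)"
proof -
  from y obtain k1 n2 m3 C D P2 Q2 C3 D3 where
    ysplit: "k1 + n2 + m3 \<le> k" "(letter_step S R ^^ k1) (pw a @ iw b) (pw C @ iw D)"
    "(letter_step S R ^^ n2) y (pw P2 @ iw Q2)"
    "(letter_step S R ^^ m3) (iw D @ pw P2) (pw C3 @ iw D3)" "A2 = C @ C3" "B2 = Q2 @ D3"
    unfolding reversal_split_def by blast
  from letter_steps_from_pw_iw[OF ysplit(2)] have "C = a" "D = b" by simp_all
  have "letter_step S R (iw (s # B1) @ pw (t # P2)) (iw B1 @ pw a @ iw b @ pw P2)"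
    using letter_step.intros[OF el, of "iw B1" "pw P2"] by simp
  also have "(letter_step S R ^^ m3) \<dots> (iw B1 @ pw a @ pw C3 @ iw D3)"
    using letter_steps_ctx[OF ysplit(4), of "iw B1 @ pw a" "[]"] \<open>D = b\<close> by simp
  also have "(letter_step S R ^^ n3) \<dots> (pw A3 @ iw (D3 @ B3))"
    using letter_steps_ctx[OF middle, of "[]" "iw D3"] ysplit(5) \<open>C = a\<close> by simp
  finally have "(letter_step S R ^^ (Suc m3 + n3)) (iw (s # B1) @ pw (t # P2)) (pw A3 @ iw (D3 @ B3))" .
  moreover have "(letter_step S R ^^ n1) (x @ [Neg s]) (pw A1 @ iw (s # B1))"
    using letter_steps_ctx[OF x, of "[]" "[Neg s]"] by simp
  moreover have "(letter_step S R ^^ n2) (Pos t # y) (pw (t # P2) @ iw Q2)"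
    using letter_steps_ctx[OF ysplit(3), of "[Pos t]" "[]"] by simp
  moreover have "n1 + n2 + (Suc m3 + n3) \<le> Suc m" using assms(5) ysplit(1) by simp
  moreover have "B2 @ B3 = Q2 @ D3 @ B3" using ysplit(6) by simp
  ultimately show ?thesis unfolding reversal_split_def by blast
qed

lemma letter_steps_append_split:
  "(letter_step S R ^^ n) (w1 @ w2) (pw P @ iw Q) \<Longrightarrow> reversal_split S R n w1 w2 P Q"
proof (induction n arbitrary: w1 w2 P Q rule: less_induct)
  case (less n)
  show ?case
  proof (cases n)
    case 0
    then show ?thesis using less.prems reversal_split_0 by simp
  next
    case (Suc m)
    with less.prems obtain W where step: "letter_step S R (w1 @ w2) W"
      and rest: "(letter_step S R ^^ m) W (pw P @ iw Q)"
      by (meson relpowp_Suc_D2)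
    have "m < n" using Suc by simp
    from step show ?thesis
    proof (cases rule: letter_step_append_cases)
      case (left w1')
      with rest less.IH[OF \<open>m < n\<close>] have "reversal_split S R m w1' w2 P Q" by simp
      with left(1) show ?thesis unfolding Suc by (rule reversal_split_step_left)
    next
      case (right w2')
      with rest less.IH[OF \<open>m < n\<close>] have "reversal_split S R m w1 w2' P Q" by simp
      with right(1) show ?thesis unfolding Suc by (rule reversal_split_step_right)
    next
      case (cross x s t a b y)
      with rest have "(letter_step S R ^^ m) (x @ (pw a @ iw b @ y)) (pw P @ iw Q)" by simp
      from less.IH[OF \<open>m < n\<close> this] obtain n1 k n3 A1 B1 A2 B2 A3 B3 where
        xsplit: "n1 + k + n3 \<le> m" "(letter_step S R ^^ n1) x (pw A1 @ iw B1)"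
        "(letter_step S R ^^ k) ((pw a @ iw b) @ y) (pw A2 @ iw B2)"
        "(letter_step S R ^^ n3) (iw B1 @ pw A2) (pw A3 @ iw B3)" "P = A1 @ A3" "Q = B2 @ B3"
        unfolding reversal_split_def by (metis append_assoc)
      have "k < n" using xsplit(1) Suc by simp
      from less.IH[OF this xsplit(3)] have "reversal_split S R k (pw a @ iw b) y A2 B2" .
      from reversal_split_step_cross[OF cross(1) xsplit(2,4) this xsplit(1)]
      show ?thesis using cross Suc xsplit(5,6) by simp
    qed
  qed
qed

lemma rrev_append_split:
  assumes "rrev S R (w1 @ w2) (pw P @ iw Q)"
  obtains P1 Q1 P2 Q2 P3 Q3 where "rrev S R w1 (pw P1 @ iw Q1)" "rrev S R w2 (pw P2 @ iw Q2)"
    "rrev S R (iw Q1 @ pw P2) (pw P3 @ iw Q3)" "P = P1 @ P3" "Q = Q2 @ Q3"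
proof -
  from assms obtain n where "(letter_step S R ^^ n) (w1 @ w2) (pw P @ iw Q)"
    unfolding rrev_eq_letter_steps rtranclp_power by blast
  then have "reversal_split S R n w1 w2 P Q" by (rule letter_steps_append_split)
  then show thesis using that unfolding reversal_split_def rrev_eq_letter_steps
    by (blast intro: relpowp_imp_rtranclp)
qed

section \<open>Soundness of reversing\<close>

declare pequiv.trans [trans]

lemma pequiv_append_right: "pequiv S R u v \<Longrightarrow> set x \<subseteq> S \<Longrightarrow> pequiv S R (u @ x) (v @ x)"
  by (rule pequiv.mult) (auto intro: pequiv.refl)

lemma pequiv_append_left: "pequiv S R u v \<Longrightarrow> set x \<subseteq> S \<Longrightarrow> pequiv S R (x @ u) (x @ v)"
  by (rule pequiv.mult) (auto intro: pequiv.refl)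

text \<open>\<open>(x, z) \<in> word_rel S R w\<close> reads \<open>x w \<equiv> z\<close>, a letter \<open>s\<close> acting as right multiplication and
  \<open>s\<inverse>\<close> as right division by \<open>s\<close>. Reversing can only enlarge this relation (\<open>rrev_word_rel_mono\<close>).\<close>

fun word_rel :: "'a set \<Rightarrow> ('a list \<times> 'a list) set \<Rightarrow> 'a sletter list \<Rightarrow> ('a list \<times> 'a list) set" where
  "word_rel S R [] = {(x, y). pequiv S R x y}"
| "word_rel S R (Pos s # w) = {(x, y). pequiv S R (x @ [s]) y} O word_rel S R w"
| "word_rel S R (Neg s # w) = {(x, y). pequiv S R x (y @ [s])} O word_rel S R w"

lemma pequiv_intro_is_rel: "is_rel R u v \<Longrightarrow> pequiv S R u v"
  unfolding is_rel_def by (auto intro: pequiv.base pequiv.sym)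

context
  fixes S :: "'a set" and R :: "('a list \<times> 'a list) set"
  assumes pp: "positive_presentation S R"
begin

lemma pequiv_in_S: "pequiv S R u v \<Longrightarrow> set u \<subseteq> S \<and> set v \<subseteq> S"
  by (induction rule: pequiv.induct) (use pp in \<open>auto simp: positive_presentation_def\<close>)

lemma pequiv_Nil_iff: "pequiv S R u v \<Longrightarrow> u = [] \<longleftrightarrow> v = []"
  by (induction rule: pequiv.induct) (use pp in \<open>auto simp: positive_presentation_def\<close>)

lemma pequiv_right_mult_O:
  "{(x, y). pequiv S R (x @ a) y} O {(y, z). pequiv S R (y @ b) z} = {(x, z). pequiv S R (x @ a @ b) z}"
proof -
  have "pequiv S R (x @ a @ b) z" if xy: "pequiv S R (x @ a) y" and yz: "pequiv S R (y @ b) z" for x y z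
  proof -
    from pequiv_in_S[OF yz] have "set b \<subseteq> S" by simp
    with xy have "pequiv S R ((x @ a) @ b) (y @ b)" by (rule pequiv_append_right)
    with yz show ?thesis by (simp add: pequiv.trans)
  qed
  moreover have "(x, z) \<in> {(x, y). pequiv S R (x @ a) y} O {(y, z). pequiv S R (y @ b) z}"
    if "pequiv S R (x @ a @ b) z" for x z
  proof
    show "(x, x @ a) \<in> {(x, y). pequiv S R (x @ a) y}"
      using pequiv_in_S[OF that] by (simp add: pequiv.refl)
  qed (use that in simp)
  ultimately show ?thesis by auto
qed

lemma pequiv_right_div_O:
  "{(x, y). pequiv S R x (y @ a)} O {(y, z). pequiv S R y (z @ b)} = {(x, z). pequiv S R x (z @ b @ a)}"
proof -
  have "pequiv S R x (z @ b @ a)" if xy: "pequiv S R x (y @ a)" and yz: "pequiv S R y (z @ b)" for x y z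
  proof -
    from pequiv_in_S[OF xy] have "set a \<subseteq> S" by simp
    with yz have "pequiv S R (y @ a) ((z @ b) @ a)" by (rule pequiv_append_right)
    with xy show ?thesis by (simp add: pequiv.trans)
  qed
  moreover have "(x, z) \<in> {(x, y). pequiv S R x (y @ a)} O {(y, z). pequiv S R y (z @ b)}"
    if "pequiv S R x (z @ b @ a)" for x z
  proof
    show "(z @ b, z) \<in> {(y, z). pequiv S R y (z @ b)}"
      using pequiv_in_S[OF that] by (simp add: pequiv.refl)
  qed (use that in simp)
  ultimately show ?thesis by auto
qed

lemma pequiv_O_word_rel: "{(x, y). pequiv S R x y} O word_rel S R w = word_rel S R w"
proof (cases w)
  case Nil
  then show ?thesis using pequiv_right_mult_O[of "[]" "[]"] by simp
next
  case (Cons c w')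
  then show ?thesis
    using pequiv_right_mult_O[of "[]"] pequiv_right_div_O[of "[]"] by (cases c) (simp_all flip: O_assoc)
qed

lemma word_rel_append: "word_rel S R (w1 @ w2) = word_rel S R w1 O word_rel S R w2"
proof (induction w1)
  case Nil
  then show ?case by (simp add: pequiv_O_word_rel)
next
  case (Cons c w1)
  then show ?case by (cases c) (simp_all add: O_assoc)
qed

lemma word_rel_pw: "word_rel S R (pw v) = {(x, z). pequiv S R (x @ v) z}"
proof (induction v)
  case (Cons s v)
  then show ?case using pequiv_right_mult_O[of "[s]" v] by simp
qed simp

lemma word_rel_iw: "word_rel S R (iw u) = {(x, z). pequiv S R x (z @ u)}"
proof (induction u rule: rev_induct)
  case (snoc s u)
  then show ?case using pequiv_right_div_O[of "[s]" u] by simp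
qed simp

lemma word_rel_ctx_mono:
  "word_rel S R w \<subseteq> word_rel S R w' \<Longrightarrow> word_rel S R (p @ w @ q) \<subseteq> word_rel S R (p @ w' @ q)"
  unfolding word_rel_append by (intro relcomp_mono) auto

lemma rrev_step_word_rel_mono: "rrev_step S R w w' \<Longrightarrow> word_rel S R w \<subseteq> word_rel S R w'"
proof (induction rule: rrev_step.induct)
  case (cancel u x y)
  have "word_rel S R (iw u @ pw u) \<subseteq> word_rel S R []"
    by (auto simp: word_rel_append word_rel_iw word_rel_pw intro: pequiv.trans)
  then show ?case using word_rel_ctx_mono[of "iw u @ pw u" "[]" x y] by simp
next
  case (rel u v u' v' x y)
  have "(a, b) \<in> word_rel S R (pw v' @ iw u')" if "pequiv S R a (m @ u)" "pequiv S R (m @ v) b" for a b m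
  proof -
    have "pequiv S R (a @ v') (m @ u @ v')"
      using pequiv_append_right[OF that(1)] rel by simp
    also have "pequiv S R \<dots> (m @ v @ u')"
      using pequiv_append_left[OF pequiv_intro_is_rel[OF rel(7)]] pequiv_in_S[OF that(1)] by simp
    also have "pequiv S R \<dots> (b @ u')"
      using pequiv_append_right[OF that(2)] rel by simp
    finally have "pequiv S R (a @ v') (b @ u')" .
    moreover have "pequiv S R (a @ v') (a @ v')"
      using pequiv_in_S[OF that(1)] rel by (simp add: pequiv.refl)
    ultimately show ?thesis
      unfolding word_rel_append word_rel_iw word_rel_pw by (intro relcompI[where b = "a @ v'"]) simp_all
  qed
  then have "word_rel S R (iw u @ pw v) \<subseteq> word_rel S R (pw v' @ iw u')"
    by (auto simp: word_rel_append word_rel_iw word_rel_pw)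
  from word_rel_ctx_mono[OF this, of x y] show ?case by simp
qed

lemma rrev_word_rel_mono: "rrev S R w w' \<Longrightarrow> word_rel S R w \<subseteq> word_rel S R w'"
  unfolding rrev_def by (induction rule: rtranclp_induct) (auto dest: rrev_step_word_rel_mono)

lemma rrev_imp_pequiv:
  assumes "(x, y) \<in> word_rel S R w" and "rrev S R w (pw v' @ iw u')"
  shows "pequiv S R (x @ v') (y @ u')"
proof -
  from assms have "(x, y) \<in> word_rel S R (pw v' @ iw u')" using rrev_word_rel_mono by blast
  then show ?thesis by (auto simp: word_rel_append word_rel_pw word_rel_iw intro: pequiv.trans)
qed

lemma word_rel_iw_self: "set u \<subseteq> S \<Longrightarrow> (u, []) \<in> word_rel S R (iw u)"
  by (simp add: word_rel_iw pequiv.refl)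

lemma word_rel_pw_self: "set v \<subseteq> S \<Longrightarrow> ([], v) \<in> word_rel S R (pw v)"
  by (simp add: word_rel_pw pequiv.refl)

lemma rrev_sound:
  assumes "set u \<subseteq> S" and "set v \<subseteq> S" and "rrev S R (iw u @ pw v) (pw v' @ iw u')"
  shows "pequiv S R (u @ v') (v @ u')"
proof (rule rrev_imp_pequiv[OF _ assms(3)])
  show "(u, v) \<in> word_rel S R (iw u @ pw v)"
    unfolding word_rel_append using word_rel_iw_self[OF assms(1)] word_rel_pw_self[OF assms(2)] ..
qed

lemma rrev_Nil_imp_pequiv: "set u \<subseteq> S \<Longrightarrow> set v \<subseteq> S \<Longrightarrow> rrev S R (iw u @ pw v) [] \<Longrightarrow> pequiv S R u v"
  using rrev_sound[of u v "[]" "[]"] by simp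

section \<open>Completeness and the cube conditions\<close>

lemma pequiv_imp_rrev_Nil_if_r_complete:
  assumes "r_complete S R" and "set u \<subseteq> S" and "set v \<subseteq> S" and "pequiv S R u v"
  shows "rrev S R (iw u @ pw v) []"
proof -
  from assms obtain u'' v'' w where rev: "rrev S R (iw u @ pw v) (pw v'' @ iw u'')"
    and "pequiv S R [] (u'' @ w)" and "pequiv S R [] (v'' @ w)"
    unfolding r_complete_def by (metis append_Nil2 empty_subsetI list.set(1))
  then have "u'' @ w = []" and "v'' @ w = []" using pequiv_Nil_iff by blast+
  with rev show ?thesis by simp
qed

lemma r_complete_if_rrev_Nil:
  assumes complete: "\<And>u v. set u \<subseteq> S \<Longrightarrow> set v \<subseteq> S \<Longrightarrow> pequiv S R u v \<Longrightarrow> rrev S R (iw u @ pw v) []"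
  shows "r_complete S R"
  unfolding r_complete_def
proof (intro allI impI)
  fix u v u' v'
  assume S: "set u \<subseteq> S" "set v \<subseteq> S" "set u' \<subseteq> S" "set v' \<subseteq> S"
    and "pequiv S R (u @ v') (v @ u')"
  with complete[of "u @ v'" "v @ u'"] have "rrev S R (iw v' @ (iw u @ pw v @ pw u')) (pw [] @ iw [])"
    by simp
  then obtain P1 Q1 P2 Q2 P3 Q3 where split: "rrev S R (iw v') (pw P1 @ iw Q1)"
    "rrev S R (iw u @ pw v @ pw u') (pw P2 @ iw Q2)" "rrev S R (iw Q1 @ pw P2) (pw P3 @ iw Q3)"
    "[] = P1 @ P3" "[] = Q2 @ Q3"
    by (rule rrev_append_split)
  from rrev_from_pw_iw[of S R "[]" v' P1 Q1] split(1) have "Q1 = v'" by simp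
  with split have v': "rrev S R (iw v' @ pw P2) (pw [] @ iw [])"
    and "rrev S R ((iw u @ pw v) @ pw u') (pw P2 @ iw [])" by simp_all
  from this(2) obtain A1 B1 C D A3 B3 where split': "rrev S R (iw u @ pw v) (pw A1 @ iw B1)"
    "rrev S R (pw u') (pw C @ iw D)" "rrev S R (iw B1 @ pw C) (pw A3 @ iw B3)"
    "P2 = A1 @ A3" "[] = D @ B3"
    by (rule rrev_append_split)
  from rrev_from_pw_iw[of S R u' "[]" C D] split'(2) have "C = u'" "D = []" by simp_all
  with split' have u': "rrev S R (iw B1 @ pw u') (pw A3 @ iw [])" by simp
  from rrev_letters_subset[OF split'(1)] S have A1: "set A1 \<subseteq> S" and B1: "set B1 \<subseteq> S"
    by (auto simp: image_Un image_image)
  from rrev_sound[OF B1 S(3) u'] have "pequiv S R u' (B1 @ A3)" by (simp add: pequiv.sym)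
  moreover from pequiv_in_S[OF this] have A3: "set A3 \<subseteq> S" by simp
  moreover from rrev_sound[OF S(4) _ v'] A1 A3 have "pequiv S R v' (A1 @ A3)" by (simp add: split'(4))
  ultimately show "\<exists>u'' v'' w. set u'' \<subseteq> S \<and> set v'' \<subseteq> S \<and> set w \<subseteq> S \<and>
      rrev S R (iw u @ pw v) (pw v'' @ iw u'') \<and> pequiv S R u' (u'' @ w) \<and> pequiv S R v' (v'' @ w)"
    using A1 B1 split'(1) by blast
qed

lemma pequiv_imp_rrev_Nil_if_transitive:
  assumes transitive: "\<And>u v w. set u \<subseteq> S \<Longrightarrow> set v \<subseteq> S \<Longrightarrow> set w \<subseteq> S \<Longrightarrow>
      rrev S R (iw u @ pw v) [] \<Longrightarrow> rrev S R (iw v @ pw w) [] \<Longrightarrow> rrev S R (iw u @ pw w) []"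
  shows "pequiv S R u v \<Longrightarrow> rrev S R (iw u @ pw v) []"
proof (induction rule: pequiv.induct)
  case (base u v)
  with pp have "u \<noteq> []" "v \<noteq> []" "set u \<subseteq> S" "set v \<subseteq> S"
    by (auto simp: positive_presentation_def)
  moreover from base have "is_rel R (u @ []) (v @ [])" by (simp add: is_rel_def)
  ultimately have "rrev_step S R ([] @ iw u @ pw v @ []) ([] @ pw [] @ iw [] @ [])"
    by (intro rrev_step.rel) auto
  then show ?case by (simp add: rrev_def r_into_rtranclp)
next
  case (refl w)
  then show ?case using letter_steps_cancel[of w S R "[]" "[]"] by (simp add: rrev_eq_letter_steps)
next
  case (sym u v)
  from rrev_winv[OF sym.IH] show ?case by simp
next
  case (trans u v w)
  with pequiv_in_S transitive show ?case by meson
next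
  case (mult u v u' v')
  from rrev_ctx[OF mult.IH(1), of "iw u'" "pw v'"] mult.IH(2) show ?case by (simp add: rrev_def)
qed

lemma word_rel_cube:
  "set u \<subseteq> S \<Longrightarrow> set v \<subseteq> S \<Longrightarrow> set w \<subseteq> S \<Longrightarrow> (u, v) \<in> word_rel S R (iw u @ pw w @ iw w @ pw v)"
  unfolding word_rel_append using word_rel_iw_self word_rel_pw_self by blast

lemma strong_r_cube_if_rrev_Nil:
  assumes complete: "\<And>u v. set u \<subseteq> S \<Longrightarrow> set v \<subseteq> S \<Longrightarrow> pequiv S R u v \<Longrightarrow> rrev S R (iw u @ pw v) []"
    and S: "set u \<subseteq> S" "set v \<subseteq> S" "set w \<subseteq> S"
  shows "strong_r_cube S R u v w"
  unfolding strong_r_cube_def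
proof (intro allI impI)
  fix u' v'
  assume "set u' \<subseteq> S" "set v' \<subseteq> S" and "rrev S R (iw u @ pw w @ iw w @ pw v) (pw v' @ iw u')"
  moreover from this have "pequiv S R (u @ v') (v @ u')"
    using rrev_imp_pequiv[OF word_rel_cube[OF S]] by blast
  ultimately show "rrev S R (iw (u @ v') @ pw (v @ u')) []" using complete[of "u @ v'" "v @ u'"] S by simp
qed

lemma r_cube_if_r_complete:
  assumes "r_complete S R" and S: "set u \<subseteq> S" "set v \<subseteq> S" "set w \<subseteq> S"
  shows "r_cube S R u v w"
  unfolding r_cube_def
proof (intro allI impI)
  fix u' v'
  assume "set u' \<subseteq> S" "set v' \<subseteq> S" and "rrev S R (iw u @ pw w @ iw w @ pw v) (pw v' @ iw u')"
  moreover from this have "pequiv S R (u @ v') (v @ u')"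
    using rrev_imp_pequiv[OF word_rel_cube[OF S]] by blast
  ultimately show "\<exists>u'' v'' w''. set u'' \<subseteq> S \<and> set v'' \<subseteq> S \<and> set w'' \<subseteq> S \<and>
      rrev S R (iw u @ pw v) (pw v'' @ iw u'') \<and> pequiv S R u' (u'' @ w'') \<and> pequiv S R v' (v'' @ w'')"
    using assms unfolding r_complete_def by blast
qed

lemma rrev_Nil_trans_if_r_cube:
  assumes "r_cube S R u w v"
    and "rrev S R (iw u @ pw v) []" and "rrev S R (iw v @ pw w) []"
  shows "rrev S R (iw u @ pw w) []"
proof -
  from assms(2,3) have "rrev S R (iw u @ pw v @ iw v @ pw w) (pw [] @ iw [])"
    using rrev_append_Nil by fastforce
  with assms(1) obtain u'' v'' w'' where rev: "rrev S R (iw u @ pw w) (pw v'' @ iw u'')"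
    and "pequiv S R [] (u'' @ w'')" and "pequiv S R [] (v'' @ w'')"
    unfolding r_cube_def by (metis empty_subsetI list.set(1))
  then have "u'' @ w'' = []" and "v'' @ w'' = []" using pequiv_Nil_iff by blast+
  with rev show ?thesis by simp
qed

end

theorem proposition3p3:
  fixes S :: "'a set" and R :: "('a list \<times> 'a list) set"
  assumes "positive_presentation S R"
  defines "C1 \<equiv> (\<forall>u v. set u \<subseteq> S \<longrightarrow> set v \<subseteq> S \<longrightarrow>
                  (pequiv S R u v \<longleftrightarrow> rrev S R (iw u @ pw v) []))"
      and "C2 \<equiv> (\<forall>u v w. set u \<subseteq> S \<longrightarrow> set v \<subseteq> S \<longrightarrow> set w \<subseteq> S \<longrightarrow>
                  rrev S R (iw u @ pw v) [] \<longrightarrow> rrev S R (iw v @ pw w) [] \<longrightarrow>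
                  rrev S R (iw u @ pw w) [])"
      and "C3 \<equiv> (\<forall>u v w. set u \<subseteq> S \<longrightarrow> set v \<subseteq> S \<longrightarrow> set w \<subseteq> S \<longrightarrow>
                  strong_r_cube S R u v w)"
      and "C4 \<equiv> (\<forall>u v w. set u \<subseteq> S \<longrightarrow> set v \<subseteq> S \<longrightarrow> set w \<subseteq> S \<longrightarrow>
                  r_cube S R u v w)"
  shows "(r_complete S R \<longleftrightarrow> C1) \<and> (C1 \<longleftrightarrow> C2) \<and> (C1 \<longleftrightarrow> C3) \<and> (C1 \<longleftrightarrow> C4)"
proof -
  note pp = assms(1)
  have C1_iff: "C1 \<longleftrightarrow> (\<forall>u v. set u \<subseteq> S \<longrightarrow> set v \<subseteq> S \<longrightarrow>
      pequiv S R u v \<longrightarrow> rrev S R (iw u @ pw v) [])"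
    unfolding C1_def using rrev_Nil_imp_pequiv[OF pp] by blast
  have "r_complete S R \<longleftrightarrow> C1"
    unfolding C1_iff using pequiv_imp_rrev_Nil_if_r_complete[OF pp] r_complete_if_rrev_Nil[OF pp] by blast
  moreover have "C1 \<Longrightarrow> C2" unfolding C1_def C2_def by (meson pequiv.trans)
  moreover have "C2 \<Longrightarrow> C1" unfolding C1_iff C2_def using pequiv_imp_rrev_Nil_if_transitive[OF pp] by blast
  moreover have "C1 \<Longrightarrow> C3" unfolding C1_iff C3_def using strong_r_cube_if_rrev_Nil[OF pp] by blast
  moreover have "C3 \<Longrightarrow> C2" unfolding C2_def C3_def using rrev_Nil_trans_if_strong_r_cube by blast
  moreover have "r_complete S R \<Longrightarrow> C4" unfolding C4_def using r_cube_if_r_complete[OF pp] by blast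
  moreover have "C4 \<Longrightarrow> C2" unfolding C2_def C4_def using rrev_Nil_trans_if_r_cube[OF pp] by blast
  ultimately show ?thesis by blast
qed

end
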